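(* Let $p$ be a prime, $e\ge1$, $G$ a finite abelian group of order $p^e$, and $q\neq p$ a prime. Let $\psi^q\colon\mathbf{Z}[G]\to\mathbf{Z}[G]$ be the ring homomorphism with $\psi^q(g)=g^q$, and $f_q(t)=\frac{1-t^q}{1-t}$. If $\rho$ is a representation of level $k>0$, then $\psi^q(b_\rho)=f_q(y_\rho)\,b_\rho$; moreover $\psi^q(b_1)=b_1$.
   Context: A representation is a group homomorphism $\rho\colon G\to\mathbf{C}^*$; its level is $k$ if $\rho(G)$ has $p^k$ elements. Write $\omega=\exp(2\pi i/p)$. For $\rho$ of level $k>0$, $b_\rho=\sum_{x\in G,\ \rho(x)=1}x-\sum_{\xi\in G,\ \rho(\xi)=\omega}\xi$ and $y_\rho\in G$ is a fixed element with $\rho(y_\rho)=\omega$; $b_1=\sum_{x\in G}x$. *)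

theory Defs
  imports Complex_Main "HOL-Algebra.Group" "HOL-Computational_Algebra.Primes"
begin

text \<open>The integral group ring Z[G] of a finite group G is modelled as functions
  carrier G \<Rightarrow> int (coefficient of each group element), equal to 0 outside carrier G.\<close>

definition gr_delta :: "('a, 'b) monoid_scheme \<Rightarrow> 'a \<Rightarrow> 'a \<Rightarrow> int" where
  "gr_delta G g = (\<lambda>z. if z \<in> carrier G \<and> z = g then 1 else 0)"

definition gr_mult :: "('a, 'b) monoid_scheme \<Rightarrow> ('a \<Rightarrow> int) \<Rightarrow> ('a \<Rightarrow> int) \<Rightarrow> 'a \<Rightarrow> int" where
  "gr_mult G a b = (\<lambda>z. if z \<in> carrier G
      then (\<Sum>x\<in>carrier G. a x * b (inv\<^bsub>G\<^esub> x \<otimes>\<^bsub>G\<^esub> z)) else 0)"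

definition psi :: "('a, 'b) monoid_scheme \<Rightarrow> nat \<Rightarrow> ('a \<Rightarrow> int) \<Rightarrow> 'a \<Rightarrow> int" where
  "psi G q a = (\<lambda>z. if z \<in> carrier G
      then (\<Sum>x\<in>{x\<in>carrier G. x [^]\<^bsub>G\<^esub> q = z}. a x) else 0)"

text \<open>f_q(y) = (1 - y^q)/(1 - y) = 1 + y + ... + y^(q-1) in Z[G].\<close>
definition f_q :: "('a, 'b) monoid_scheme \<Rightarrow> nat \<Rightarrow> 'a \<Rightarrow> 'a \<Rightarrow> int" where
  "f_q G q y = (\<lambda>z. \<Sum>i<q. gr_delta G (y [^]\<^bsub>G\<^esub> i) z)"

definition representation :: "('a, 'b) monoid_scheme \<Rightarrow> ('a \<Rightarrow> complex) \<Rightarrow> bool" where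
  "representation G \<rho> \<longleftrightarrow> (\<forall>x\<in>carrier G. \<rho> x \<noteq> 0) \<and>
     (\<forall>x\<in>carrier G. \<forall>y\<in>carrier G. \<rho> (x \<otimes>\<^bsub>G\<^esub> y) = \<rho> x * \<rho> y)"

definition rep_level :: "('a, 'b) monoid_scheme \<Rightarrow> nat \<Rightarrow> ('a \<Rightarrow> complex) \<Rightarrow> nat \<Rightarrow> bool" where
  "rep_level G p \<rho> k \<longleftrightarrow> card (\<rho> ` carrier G) = p ^ k"

definition omega :: "nat \<Rightarrow> complex" where
  "omega p = exp (2 * pi * \<i> / of_nat p)"

definition b_rho :: "('a, 'b) monoid_scheme \<Rightarrow> nat \<Rightarrow> ('a \<Rightarrow> complex) \<Rightarrow> 'a \<Rightarrow> int" where
  "b_rho G p \<rho> = (\<lambda>z. (if z \<in> carrier G \<and> \<rho> z = 1 then 1 else 0)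
                     - (if z \<in> carrier G \<and> \<rho> z = omega p then 1 else 0))"

definition b_one :: "('a, 'b) monoid_scheme \<Rightarrow> 'a \<Rightarrow> int" where
  "b_one G = (\<lambda>z. if z \<in> carrier G then 1 else 0)"

end

theory Submission
  imports Defs "HOL-Algebra.Multiplicative_Group" "HOL-Number_Theory.Cong"
begin

text \<open>Since \<open>q\<close> is prime to \<open>|G| = p^e\<close>, pick \<open>m\<close> with \<open>q m \<equiv> 1 (mod |G|)\<close>.
  Then \<open>g \<mapsto> g^q\<close> is a bijection of \<open>G\<close> with inverse \<open>g \<mapsto> g^m\<close>, so \<open>\<psi>^q a\<close> has
  coefficient \<open>a(z^m)\<close> at \<open>z\<close>; in particular \<open>\<psi>^q(b\<^sub>1) = b\<^sub>1\<close>. The values of \<open>\<rho>\<close>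
  are \<open>|G|\<close>-th roots of unity, as is \<open>\<omega>\<close>, so likewise \<open>\<rho>(z)^m = \<omega> \<longleftrightarrow> \<rho>(z) = \<omega>^q\<close>.
  Hence the coefficient of \<open>\<psi>^q(b\<^sub>\<rho>)\<close> at \<open>z\<close> is \<open>[\<rho> z = 1] - [\<rho> z = \<omega>^q]\<close>.
  On the other side \<open>f\<^sub>q(y) b\<^sub>\<rho> = \<Sum>\<^sub>i\<^sub><\<^sub>q y^i b\<^sub>\<rho>\<close>, and since \<open>\<rho>(y) = \<omega>\<close> the coefficient of
  \<open>y^i b\<^sub>\<rho>\<close> at \<open>z\<close> is \<open>[\<rho> z = \<omega>^i] - [\<rho> z = \<omega>^(i+1)]\<close>; the sum telescopes to the
  same value.\<close>

lemma power_eq_power_if_cong: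
  fixes c :: "'a::monoid_mult"
  assumes "c ^ N = 1" and "[a = b] (mod N)"
  shows "c ^ a = c ^ b"
proof -
  have reduce: "c ^ k = c ^ (k mod N)" for k
  proof -
    have "c ^ k = (c ^ N) ^ (k div N) * c ^ (k mod N)"
      by (metis div_mult_mod_eq power_add power_mult mult.commute)
    then show ?thesis using assms(1) by simp
  qed
  show ?thesis using reduce[of a] reduce[of b] assms(2) unfolding cong_def by simp
qed

lemma power_inverse_exponent_eq_iff:
  fixes c w :: "'a::comm_monoid_mult"
  assumes "c ^ N = 1" and "w ^ N = 1" and "[q * m = 1] (mod N)"
  shows "c ^ m = w \<longleftrightarrow> c = w ^ q"
proof
  assume "c ^ m = w"
  then have "w ^ q = c ^ (q * m)" by (simp add: power_mult mult.commute)
  also have "\<dots> = c" using power_eq_power_if_cong[OF assms(1,3)] by simp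
  finally show "c = w ^ q" ..
next
  assume "c = w ^ q"
  then have "c ^ m = w ^ (q * m)" by (simp add: power_mult)
  also have "\<dots> = w" using power_eq_power_if_cong[OF assms(2,3)] by simp
  finally show "c ^ m = w" .
qed

lemma omega_power_eq_1:
  assumes "p dvd n"
  shows "omega p ^ n = 1"
proof (cases "p = 0")
  case True
  then show ?thesis using assms by simp
next
  case False
  have "omega p ^ p = exp (of_nat p * (2 * pi * \<i> / of_nat p))"
    unfolding omega_def by (rule exp_of_nat_mult[symmetric])
  also have "\<dots> = 1" using False by simp
  finally show ?thesis using assms by (auto simp: power_mult)
qed

context group
begin

lemma nat_pow_eq_nat_pow_if_cong:
  fixes a b N :: nat
  assumes "x \<in> carrier G" and "x [^] N = \<one>" and "[a = b] (mod N)"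
  shows "x [^] a = x [^] b"
proof -
  have "[a = b] (mod ord x)"
    using assms pow_eq_id cong_dvd_modulus_nat by blast
  then have "int (ord x) dvd int b - int a"
    by (metis cong_iff_dvd_diff cong_int_iff cong_sym)
  then show ?thesis
    using int_pow_eq[OF assms(1), of "int a" "int b"] by (simp add: int_pow_int)
qed

lemma nat_pow_inverse_exponent_eq_iff:
  assumes "x \<in> carrier G" and "z \<in> carrier G" and "[q * m = 1] (mod order G)"
  shows "x [^] q = z \<longleftrightarrow> x = z [^] m"
proof
  assume "x [^] q = z"
  then have "z [^] m = x [^] (q * m)" using assms(1) by (metis nat_pow_pow)
  also have "\<dots> = x"
    using nat_pow_eq_nat_pow_if_cong[OF assms(1) pow_order_eq_1 assms(3)] assms(1) by simp
  finally show "x = z [^] m" ..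
next
  assume "x = z [^] m"
  then have "x [^] q = z [^] (q * m)" using assms(2) by (simp add: nat_pow_pow mult.commute)
  also have "\<dots> = z"
    using nat_pow_eq_nat_pow_if_cong[OF assms(2) pow_order_eq_1 assms(3)] assms(2) by simp
  finally show "x [^] q = z" .
qed

lemma psi_apply:
  assumes "[q * m = 1] (mod order G)"
  shows "psi G q a z = (if z \<in> carrier G then a (z [^] m) else 0)"
proof -
  have "{x \<in> carrier G. x [^] q = z} = {z [^] m}" if "z \<in> carrier G"
    using nat_pow_inverse_exponent_eq_iff[OF _ that assms] that by auto
  then show ?thesis unfolding psi_def by simp
qed

lemma psi_b_one:
  assumes "[q * m = 1] (mod order G)"
  shows "psi G q (b_one G) = b_one G"
  by (rule ext) (simp add: psi_apply[OF assms] b_one_def)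

lemma sum_gr_delta_mult:
  assumes "finite (carrier G)" and "g \<in> carrier G"
  shows "(\<Sum>x\<in>carrier G. gr_delta G g x * f x) = f g"
proof -
  have "(\<Sum>x\<in>carrier G. gr_delta G g x * f x) = (\<Sum>x\<in>carrier G. if x = g then f x else 0)"
    by (rule sum.cong) (auto simp: gr_delta_def)
  then show ?thesis using assms by (simp add: sum.delta')
qed

lemma gr_mult_f_q_apply:
  assumes "finite (carrier G)" and "y \<in> carrier G" and "z \<in> carrier G"
  shows "gr_mult G (f_q G q y) a z = (\<Sum>i<q. a (inv (y [^] i) \<otimes> z))"
proof -
  have "gr_mult G (f_q G q y) a z
      = (\<Sum>i<q. \<Sum>x\<in>carrier G. gr_delta G (y [^] i) x * a (inv x \<otimes> z))"
    using assms(3) by (simp add: gr_mult_def f_q_def sum_distrib_right sum.swap[of _ "carrier G"])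
  also have "\<dots> = (\<Sum>i<q. a (inv (y [^] i) \<otimes> z))"
    using assms(1,2) by (simp add: sum_gr_delta_mult)
  finally show ?thesis .
qed

lemma representation_one:
  assumes "representation G \<rho>"
  shows "\<rho> \<one> = 1"
proof -
  have "\<rho> \<one> * \<rho> \<one> = \<rho> \<one> * 1" and "\<rho> \<one> \<noteq> 0"
    using assms unfolding representation_def by (metis one_closed l_one mult_1_right)+
  then show ?thesis by simp
qed

lemma representation_nat_pow:
  assumes "representation G \<rho>" and "x \<in> carrier G"
  shows "\<rho> (x [^] (n::nat)) = \<rho> x ^ n"
proof (induction n)
  case 0
  show ?case using representation_one[OF assms(1)] by simp
next
  case (Suc n)
  then show ?case using assms unfolding representation_def by simp
qed

lemma representation_inv_mult:
  assumes "representation G \<rho>" and "x \<in> carrier G" and "z \<in> carrier G"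
  shows "\<rho> (inv x \<otimes> z) = \<rho> z / \<rho> x"
proof -
  have "\<rho> (inv x) * \<rho> x = 1" and "\<rho> x \<noteq> 0"
    using assms representation_one[OF assms(1)] unfolding representation_def
    by (metis inv_closed l_inv)+
  moreover have "\<rho> (inv x \<otimes> z) = \<rho> (inv x) * \<rho> z"
    using assms unfolding representation_def by simp
  ultimately show ?thesis by (simp add: field_simps)
qed

lemma representation_root_of_unity:
  assumes "representation G \<rho>" and "z \<in> carrier G"
  shows "\<rho> z ^ order G = 1"
  using representation_nat_pow[OF assms, of "order G"] pow_order_eq_1[OF assms(2)]
    representation_one[OF assms(1)] by simp

lemma b_rho_apply:
  "z \<in> carrier G \<Longrightarrow> b_rho G p \<rho> z = of_bool (\<rho> z = 1) - of_bool (\<rho> z = omega p)"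
  by (simp add: b_rho_def)

lemma psi_b_rho_apply:
  assumes "representation G \<rho>" and "p dvd order G" and "[q * m = 1] (mod order G)"
    and "z \<in> carrier G"
  shows "psi G q (b_rho G p \<rho>) z = of_bool (\<rho> z = 1) - of_bool (\<rho> z = omega p ^ q)"
proof -
  have "\<rho> z ^ m = w \<longleftrightarrow> \<rho> z = w ^ q" if "w ^ order G = 1" for w
    using power_inverse_exponent_eq_iff[OF representation_root_of_unity[OF assms(1,4)] that assms(3)] .
  from this[of 1] this[of "omega p"] show ?thesis
    using assms(4) omega_power_eq_1[OF assms(2)]
    by (simp add: psi_apply[OF assms(3)] b_rho_apply representation_nat_pow[OF assms(1)])
qed

lemma gr_mult_f_q_b_rho_apply:
  assumes "finite (carrier G)" and "representation G \<rho>"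
    and "y \<in> carrier G" and "\<rho> y = omega p" and "z \<in> carrier G"
  shows "gr_mult G (f_q G q y) (b_rho G p \<rho>) z
       = of_bool (\<rho> z = 1) - of_bool (\<rho> z = omega p ^ q)"
proof -
  define w where "w = omega p"
  have "w \<noteq> 0" unfolding w_def omega_def by simp
  have shifted_coeff: "b_rho G p \<rho> (inv (y [^] i) \<otimes> z)
      = of_bool (\<rho> z = w ^ i) - of_bool (\<rho> z = w ^ Suc i)" for i
  proof -
    have "\<rho> (inv (y [^] i) \<otimes> z) = \<rho> z / w ^ i"
      using representation_inv_mult[OF assms(2) nat_pow_closed[OF assms(3)] assms(5)]
        representation_nat_pow[OF assms(2,3)] assms(4)
      unfolding w_def by simp
    moreover have "\<rho> z / w ^ i = 1 \<longleftrightarrow> \<rho> z = w ^ i"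
      and "\<rho> z / w ^ i = w \<longleftrightarrow> \<rho> z = w ^ Suc i"
      using \<open>w \<noteq> 0\<close> by (auto simp: field_simps)
    ultimately show ?thesis
      using assms(3,5) by (simp add: b_rho_apply w_def)
  qed
  have "gr_mult G (f_q G q y) (b_rho G p \<rho>) z
      = (\<Sum>i<q. of_bool (\<rho> z = w ^ i) - of_bool (\<rho> z = w ^ Suc i))"
    using gr_mult_f_q_apply[OF assms(1,3,5)] shifted_coeff by simp
  also have "\<dots> = of_bool (\<rho> z = 1) - of_bool (\<rho> z = w ^ q)"
    using sum_lessThan_telescope'[of "\<lambda>i. of_bool (\<rho> z = w ^ i) :: int" q] by simp
  finally show ?thesis unfolding w_def .
qed

lemma psi_b_rho:
  assumes "finite (carrier G)" and "representation G \<rho>" and "p dvd order G"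
    and "[q * m = 1] (mod order G)" and "y \<in> carrier G" and "\<rho> y = omega p"
  shows "psi G q (b_rho G p \<rho>) = gr_mult G (f_q G q y) (b_rho G p \<rho>)"
proof
  fix z
  show "psi G q (b_rho G p \<rho>) z = gr_mult G (f_q G q y) (b_rho G p \<rho>) z"
  proof (cases "z \<in> carrier G")
    case True
    then show ?thesis
      using psi_b_rho_apply[OF assms(2-4)] gr_mult_f_q_b_rho_apply[OF assms(1,2,5,6)] by simp
  next
    case False
    then show ?thesis by (simp add: psi_def gr_mult_def)
  qed
qed

end

theorem mainTheorem7:
  fixes G :: "('a, 'b) monoid_scheme" and p e q :: nat
  assumes "comm_group G" and "finite (carrier G)"
    and "prime p" and "e \<ge> 1" and "card (carrier G) = p ^ e"
    and "prime q" and "q \<noteq> p"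
  shows "(\<forall>\<rho> k y. representation G \<rho> \<and> rep_level G p \<rho> k \<and> k > 0
            \<and> y \<in> carrier G \<and> \<rho> y = omega p
          \<longrightarrow> psi G q (b_rho G p \<rho>) = gr_mult G (f_q G q y) (b_rho G p \<rho>))
         \<and> psi G q (b_one G) = b_one G"
proof -
  interpret group G using assms(1) by (simp add: comm_group.axioms(2))
  have "coprime q (order G)"
    using assms(3-7) primes_coprime by (simp add: order_def)
  then obtain m where m: "[q * m = 1] (mod order G)"
    using cong_solve_coprime_nat by auto
  have "p dvd order G"
    using assms(4,5) by (simp add: order_def dvd_power)
  then show ?thesis
    using psi_b_rho[OF assms(2) _ _ m] psi_b_one[OF m] by blast
qed

end
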